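(* Let $u=u(x,t)$ and $w=w(x,t)$ be smooth functions and let $\lambda\neq 0$ be a constant (spectral parameter). Define the $3\times 3$ matrices \[ A=\begin{pmatrix} 0 & -2 & 0 \\ -u & 0 & -2 \\ \frac{1}{72}\frac{w}{\lambda} + \lambda & -u & 0 \end{pmatrix}, \] \[ B=\begin{pmatrix} 2 u_{xxx} - 32 u u_x + 24 \lambda u & 4 u_{xx} - 32 u^2 & -144 \lambda \\ -u_{xxxx} + 18 u u_{xx} + 16 u_x^2 - 12 \lambda u_x - 16 u^3 + 72 \lambda^2 + w & -48 \lambda u & 4 u_{xx} - 32 u^2 \\ 4\lambda u_{xx} - 20 \lambda u^2-\frac{w (u_{xx} - 8 u^2)}{36\lambda} & b_{32} & -2 u_{xxx} + 32 u u_x + 24 \lambda u \end{pmatrix}, \] where $b_{32}=-u_{xxxx} + 18 u u_{xx} + 16 u_x^2 + 12 \lambda u_x - 16 u^3 + 72 \lambda^2+w$. Then the zero curvature equation \[ A_t-B_x+[A,B]=0,\qquad [A,B]=AB-BA, \] holds (for all $\lambda\neq 0$) if and only if $u,w$ satisfy the system \[ \begin{aligned} u_t &= u_{xxxxx}-20 u u_{xxx} -50 u_x u_{xx}+80 u^2 u_x-w_x,\\ w_t &= -6 w u_{xxx}-2 u_{xx} w_x+96 w u u_x+16 w_x u^2 . \end{aligned} \]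
   Context: Subscripts denote partial derivatives, e.g. $u_{xxx}=\partial^3 u/\partial x^3$, $A_t=\partial A/\partial t$, $B_x=\partial B/\partial x$ (entrywise). *)

theory Defs
  imports "HOL-Analysis.Analysis"
begin

text \<open>Functions of (x,t) are represented as functions on real \<times> real, first component x.\<close>

definition Dx :: "(real \<times> real \<Rightarrow> real) \<Rightarrow> real \<times> real \<Rightarrow> real" where
  "Dx f = (\<lambda>(x, t). deriv (\<lambda>y. f (y, t)) x)"

definition Dt :: "(real \<times> real \<Rightarrow> real) \<Rightarrow> real \<times> real \<Rightarrow> real" where
  "Dt f = (\<lambda>(x, t). deriv (\<lambda>s. f (x, s)) t)"

fun iter_partial :: "bool list \<Rightarrow> (real \<times> real \<Rightarrow> real) \<Rightarrow> real \<times> real \<Rightarrow> real" where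
  "iter_partial [] f = f"
| "iter_partial (b # bs) f = (if b then Dx else Dt) (iter_partial bs f)"

text \<open>Smooth (C-infinity) on R^2: every iterated partial derivative is (Frechet)
  differentiable everywhere (hence all partials exist and are continuous).\<close>
definition smooth2 :: "(real \<times> real \<Rightarrow> real) \<Rightarrow> bool" where
  "smooth2 f \<longleftrightarrow> (\<forall>bs p. iter_partial bs f differentiable (at p))"

definition mDx :: "(real \<times> real \<Rightarrow> real^'n^'m) \<Rightarrow> real \<times> real \<Rightarrow> real^'n^'m" where
  "mDx M p = (\<chi> i j. Dx (\<lambda>q. M q $ i $ j) p)"

definition mDt :: "(real \<times> real \<Rightarrow> real^'n^'m) \<Rightarrow> real \<times> real \<Rightarrow> real^'n^'m" where
  "mDt M p = (\<chi> i j. Dt (\<lambda>q. M q $ i $ j) p)"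

definition Lax_A :: "(real \<times> real \<Rightarrow> real) \<Rightarrow> (real \<times> real \<Rightarrow> real) \<Rightarrow> real
    \<Rightarrow> real \<times> real \<Rightarrow> real^3^3" where
  "Lax_A u w lam p = vector [
     vector [0, -2, 0],
     vector [- u p, 0, -2],
     vector [w p / (72 * lam) + lam, - u p, 0]]"

definition Lax_B :: "(real \<times> real \<Rightarrow> real) \<Rightarrow> (real \<times> real \<Rightarrow> real) \<Rightarrow> real
    \<Rightarrow> real \<times> real \<Rightarrow> real^3^3" where
  "Lax_B u w lam p = (let
     u0 = u p; u1 = Dx u p; u2 = Dx (Dx u) p; u3 = Dx (Dx (Dx u)) p;
     u4 = Dx (Dx (Dx (Dx u))) p; w0 = w p
   in vector [
     vector [2*u3 - 32*u0*u1 + 24*lam*u0, 4*u2 - 32*u0^2, -144*lam],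
     vector [- u4 + 18*u0*u2 + 16*u1^2 - 12*lam*u1 - 16*u0^3 + 72*lam^2 + w0,
             -48*lam*u0, 4*u2 - 32*u0^2],
     vector [4*lam*u2 - 20*lam*u0^2 - w0*(u2 - 8*u0^2)/(36*lam),
             - u4 + 18*u0*u2 + 16*u1^2 + 12*lam*u1 - 16*u0^3 + 72*lam^2 + w0,
             - 2*u3 + 32*u0*u1 + 24*lam*u0]])"

end

theory Submission
  imports Defs
begin

text \<open>The zero-curvature expression is computed entrywise: smoothness makes the partial
  derivatives of the entries of A and B computable by the chain rule, and after cancellation
  only the entries (2,1), (3,2) and (3,1) survive, carrying the residuals of the two evolution
  equations. The spectral parameter enters these residuals only through the factor 1/(72 lam)
  in entry (3,1), so the equation for a single nonzero lam already forces the whole system.\<close>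

lemma iter_partial_Dx: "iter_partial bs (Dx f) = iter_partial (bs @ [True]) f"
  by (induction bs) auto

lemma smooth2_Dx: "smooth2 f \<Longrightarrow> smooth2 (Dx f)"
  unfolding smooth2_def by (simp add: iter_partial_Dx)

lemma smooth2_imp_differentiable: "smooth2 f \<Longrightarrow> f differentiable (at p)"
  unfolding smooth2_def by (metis iter_partial.simps(1))

lemma has_real_derivative_Dx:
  assumes "f differentiable (at (x, t))"
  shows "((\<lambda>y. f (y, t)) has_real_derivative Dx f (x, t)) (at x)"
proof -
  have "(\<lambda>y. (y, t)) differentiable (at x)"
    by (intro differentiable_Pair differentiable_ident differentiable_const)
  then have "(f \<circ> (\<lambda>y. (y, t))) differentiable (at x)"
    using assms by (rule differentiable_chain_at)
  then show ?thesis
    unfolding Dx_def by (simp add: o_def DERIV_deriv_iff_real_differentiable)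
qed

lemma has_real_derivative_Dt:
  assumes "f differentiable (at (x, t))"
  shows "((\<lambda>s. f (x, s)) has_real_derivative Dt f (x, t)) (at t)"
proof -
  have "(\<lambda>s. (x, s)) differentiable (at t)"
    by (intro differentiable_Pair differentiable_ident differentiable_const)
  then have "(f \<circ> (\<lambda>s. (x, s))) differentiable (at t)"
    using assms by (rule differentiable_chain_at)
  then show ?thesis
    unfolding Dt_def by (simp add: o_def DERIV_deriv_iff_real_differentiable)
qed

lemma Dx_eqI: "((\<lambda>y. f (y, t)) has_real_derivative D) (at x) \<Longrightarrow> Dx f (x, t) = D"
  unfolding Dx_def by (simp add: DERIV_imp_deriv)

lemma Dt_eqI: "((\<lambda>s. f (x, s)) has_real_derivative D) (at t) \<Longrightarrow> Dt f (x, t) = D"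
  unfolding Dt_def by (simp add: DERIV_imp_deriv)

lemma mDt_Lax_A:
  assumes "smooth2 u" and "smooth2 w" and "lam \<noteq> 0"
  shows "mDt (Lax_A u w lam) p =
    vector [vector [0, 0, 0], vector [- Dt u p, 0, 0], vector [Dt w p / (72 * lam), - Dt u p, 0]]"
proof -
  obtain x t where p: "p = (x, t)" by fastforce
  show ?thesis
    unfolding p mDt_def Lax_A_def
    by (auto simp: vec_eq_iff forall_3 assms(3) intro!: Dt_eqI derivative_eq_intros
          has_real_derivative_Dt smooth2_imp_differentiable assms(1,2))
qed

lemma mDx_Lax_B:
  assumes "smooth2 u" and "smooth2 w" and "lam \<noteq> 0"
  shows "mDx (Lax_B u w lam) p = (let
     u0 = u p; u1 = Dx u p; u2 = Dx (Dx u) p; u3 = Dx (Dx (Dx u)) p;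
     u4 = Dx (Dx (Dx (Dx u))) p; u5 = Dx (Dx (Dx (Dx (Dx u)))) p; w0 = w p; w1 = Dx w p
   in vector [
     vector [2*u4 - 32*(u1^2 + u0*u2) + 24*lam*u1, 4*u3 - 64*u0*u1, 0],
     vector [- u5 + 18*u0*u3 + 50*u1*u2 - 48*u0^2*u1 - 12*lam*u2 + w1, -48*lam*u1, 4*u3 - 64*u0*u1],
     vector [4*lam*u3 - 40*lam*u0*u1 - (w1*(u2 - 8*u0^2) + w0*(u3 - 16*u0*u1))/(36*lam),
             - u5 + 18*u0*u3 + 50*u1*u2 - 48*u0^2*u1 + 12*lam*u2 + w1,
             - 2*u4 + 32*(u1^2 + u0*u2) + 24*lam*u1]])"
proof -
  obtain x t where p: "p = (x, t)" by fastforce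
  have smooth: "smooth2 u" "smooth2 (Dx u)" "smooth2 (Dx (Dx u))" "smooth2 (Dx (Dx (Dx u)))"
      "smooth2 (Dx (Dx (Dx (Dx u))))" "smooth2 w"
    using assms by (simp_all add: smooth2_Dx)
  show ?thesis
    unfolding p mDx_def Lax_B_def Let_def
    by (auto simp: vec_eq_iff forall_3 assms(3) intro!: Dx_eqI derivative_eq_intros
          has_real_derivative_Dx smooth2_imp_differentiable smooth)
      (simp_all add: field_simps power2_eq_square assms(3))
qed

definition u_flow :: "(real \<times> real \<Rightarrow> real) \<Rightarrow> (real \<times> real \<Rightarrow> real) \<Rightarrow> real \<times> real \<Rightarrow> real" where
  "u_flow u w p = Dx (Dx (Dx (Dx (Dx u)))) p - 20 * u p * Dx (Dx (Dx u)) p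
     - 50 * Dx u p * Dx (Dx u) p + 80 * (u p)^2 * Dx u p - Dx w p"

definition w_flow :: "(real \<times> real \<Rightarrow> real) \<Rightarrow> (real \<times> real \<Rightarrow> real) \<Rightarrow> real \<times> real \<Rightarrow> real" where
  "w_flow u w p = - 6 * w p * Dx (Dx (Dx u)) p - 2 * Dx (Dx u) p * Dx w p
     + 96 * w p * u p * Dx u p + 16 * Dx w p * (u p)^2"

lemma zero_curvature_Lax:
  assumes "smooth2 u" and "smooth2 w" and "lam \<noteq> 0"
  shows "mDt (Lax_A u w lam) p - mDx (Lax_B u w lam) p
      + (Lax_A u w lam p ** Lax_B u w lam p - Lax_B u w lam p ** Lax_A u w lam p) =
    vector [vector [0, 0, 0],
            vector [u_flow u w p - Dt u p, 0, 0],
            vector [(Dt w p - w_flow u w p) / (72 * lam), u_flow u w p - Dt u p, 0]]"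
  by (simp add: mDt_Lax_A[OF assms] mDx_Lax_B[OF assms] Lax_A_def Lax_B_def Let_def
      u_flow_def w_flow_def vec_eq_iff forall_3 matrix_matrix_mult_def sum_3)
    (simp add: field_simps power2_eq_square power3_eq_cube assms(3))

lemma zero_curvature_Lax_iff:
  assumes "smooth2 u" and "smooth2 w" and "lam \<noteq> 0"
  shows "mDt (Lax_A u w lam) p - mDx (Lax_B u w lam) p
      + (Lax_A u w lam p ** Lax_B u w lam p - Lax_B u w lam p ** Lax_A u w lam p) = 0
    \<longleftrightarrow> Dt u p = u_flow u w p \<and> Dt w p = w_flow u w p"
  using assms(3) by (auto simp: zero_curvature_Lax[OF assms] vec_eq_iff forall_3)

theorem mainTheorem1:
  fixes u w :: "real \<times> real \<Rightarrow> real"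
  assumes "smooth2 u" and "smooth2 w"
  shows "(\<forall>lam::real. lam \<noteq> 0 \<longrightarrow> (\<forall>p.
            mDt (Lax_A u w lam) p - mDx (Lax_B u w lam) p
            + (Lax_A u w lam p ** Lax_B u w lam p - Lax_B u w lam p ** Lax_A u w lam p) = 0))
     \<longleftrightarrow>
         (\<forall>p. Dt u p = Dx (Dx (Dx (Dx (Dx u)))) p - 20 * u p * Dx (Dx (Dx u)) p
                - 50 * Dx u p * Dx (Dx u) p + 80 * (u p)^2 * Dx u p - Dx w p
            \<and> Dt w p = - 6 * w p * Dx (Dx (Dx u)) p - 2 * Dx (Dx u) p * Dx w p
                + 96 * w p * u p * Dx u p + 16 * Dx w p * (u p)^2)"
  using zero_curvature_Lax_iff[OF assms] unfolding u_flow_def w_flow_def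
  by (metis zero_neq_one)

end
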